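(* Let $n$ be even and $F\colon\mathbb F_2^n\to\mathbb F_2^n$ a quadratic APN function. Let $2^{\frac{n+d_1}{2}}$ be the smallest non-bent amplitude of $F$, $2^{\frac{n+d_2}{2}}$ the second smallest non-bent amplitude of $F$, and $k$ the number of component functions with amplitude $2^{\frac{n+d_1}{2}}$. Then: (i) if $2^{d_2-d_1}\nmid k$ and $d_2<2d_1$, then $k\ge 2^{d_1}+1$; (ii) if $2^{d_2-d_1}\nmid k$ and $d_2\ge2d_1$, then either $d_1\mid d_2$ and $k=\frac{2^{d_2}-1}{2^{d_1}-1}$, or $k>2\cdot2^{d_2-d_1}$; (iii) if $2^{d_2-d_1}\mid k$ and $d_2\le 2d_1$, then $k\ge 2^{d_2}-2^{d_1}+2^{d_2-d_1}$; (iv) if $2^{d_2-d_1}\mid k$ and $d_2\ge 2d_1$, then $k\ge 2^{d_2}$.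
   Context: $\langle\cdot,\cdot\rangle$ is the standard dot product. $F$ is APN if for every $a\ne0$ and $c$, $F(x)+F(x+a)=c$ has at most 2 solutions; quadratic if each component $F_b(x)=\langle b,F(x)\rangle$ is a quadratic form plus an affine function. For quadratic $F$ and fixed $b$ there is $k'$ with $|W_F(b,a)|\in\{0,2^{(n+k')/2}\}$ for all $a$, where $W_F(b,a)=\sum_x(-1)^{F_b(x)+\langle x,a\rangle}$; $2^{(n+k')/2}$ is the amplitude of $F_b$. A component is bent if its amplitude is $2^{n/2}$; "non-bent amplitudes" refer to amplitudes of non-trivial ($b\neq0$) non-bent components. *)

theory Defs
  imports Complex_Main
begin

text \<open>Vectors of F_2^n are modelled as functions nat => bool vanishing outside {0..<n}.\<close>

definition vecs :: "nat \<Rightarrow> (nat \<Rightarrow> bool) set" where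
  "vecs n = {x. \<forall>i. n \<le> i \<longrightarrow> \<not> x i}"

definition vadd :: "(nat \<Rightarrow> bool) \<Rightarrow> (nat \<Rightarrow> bool) \<Rightarrow> (nat \<Rightarrow> bool)" where
  "vadd x y = (\<lambda>i. x i \<noteq> y i)"

definition vzero :: "nat \<Rightarrow> bool" where
  "vzero = (\<lambda>_. False)"

text \<open>Standard dot product over F_2 (value True means 1).\<close>
definition dotp :: "nat \<Rightarrow> (nat \<Rightarrow> bool) \<Rightarrow> (nat \<Rightarrow> bool) \<Rightarrow> bool" where
  "dotp n a x = odd (card {i. i < n \<and> a i \<and> x i})"

definition qform :: "nat \<Rightarrow> (nat \<Rightarrow> nat \<Rightarrow> bool) \<Rightarrow> (nat \<Rightarrow> bool) \<Rightarrow> bool" where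
  "qform n Q x = odd (card {(i, j). i < j \<and> j < n \<and> Q i j \<and> x i \<and> x j})"

definition component :: "nat \<Rightarrow> ((nat \<Rightarrow> bool) \<Rightarrow> (nat \<Rightarrow> bool)) \<Rightarrow> (nat \<Rightarrow> bool) \<Rightarrow> (nat \<Rightarrow> bool) \<Rightarrow> bool" where
  "component n F b x = dotp n b (F x)"

definition is_APN :: "nat \<Rightarrow> ((nat \<Rightarrow> bool) \<Rightarrow> (nat \<Rightarrow> bool)) \<Rightarrow> bool" where
  "is_APN n F \<longleftrightarrow> (\<forall>a \<in> vecs n. a \<noteq> vzero \<longrightarrow>
      (\<forall>c \<in> vecs n. card {x \<in> vecs n. vadd (F x) (F (vadd x a)) = c} \<le> 2))"

definition is_quadratic :: "nat \<Rightarrow> ((nat \<Rightarrow> bool) \<Rightarrow> (nat \<Rightarrow> bool)) \<Rightarrow> bool" where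
  "is_quadratic n F \<longleftrightarrow> (\<forall>b \<in> vecs n. \<exists>Q l c. \<forall>x \<in> vecs n.
      component n F b x = (c \<noteq> (dotp n l x \<noteq> qform n Q x)))"

definition walsh :: "nat \<Rightarrow> ((nat \<Rightarrow> bool) \<Rightarrow> (nat \<Rightarrow> bool)) \<Rightarrow> (nat \<Rightarrow> bool) \<Rightarrow> (nat \<Rightarrow> bool) \<Rightarrow> int" where
  "walsh n F b a = (\<Sum>x \<in> vecs n. if component n F b x \<noteq> dotp n x a then -1 else 1)"

text \<open>Amplitude of F_b: the common nonzero value of |W_F(b,a)|, i.e. its maximum over a.\<close>
definition amplitude :: "nat \<Rightarrow> ((nat \<Rightarrow> bool) \<Rightarrow> (nat \<Rightarrow> bool)) \<Rightarrow> (nat \<Rightarrow> bool) \<Rightarrow> real" where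
  "amplitude n F b = real_of_int (Max {\<bar>walsh n F b a\<bar> | a. a \<in> vecs n})"

definition nonbent_amplitudes :: "nat \<Rightarrow> ((nat \<Rightarrow> bool) \<Rightarrow> (nat \<Rightarrow> bool)) \<Rightarrow> real set" where
  "nonbent_amplitudes n F = {amplitude n F b | b. b \<in> vecs n \<and> b \<noteq> vzero
      \<and> amplitude n F b \<noteq> 2 powr (real n / 2)}"

end

theory Submission
  imports Defs "HOL-Computational_Algebra.Primes"
begin

text \<open>
  For quadratic F the polar form of each component F_b is bilinear, and its radical, the linear
  space V_b, governs the Walsh spectrum: W_F(b,u)^2 is either 0 or 2^n |V_b|, so the amplitude of
  F_b is 2^((n + dim V_b)/2). If F is moreover APN, then for a nonzero the map
  x |-> F(x + a) + F(x) + F(a) + F(0) is linear with kernel {0, a}; its image is a hyperplane, so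
  a lies in V_b for exactly one b /= 0. Hence the V_b with b /= 0 form a partition of the nonzero
  vectors into subspaces. For such a partition let T be the set of members of dimension d1 and
  t(u) the number of members of T orthogonal to u. Character sums give the first two moments of t,
  and, since all other members have dimension 0 or at least d2, t(u) is congruent to |T| modulo
  2^(d2 - d1). The sign of the sum over u of (t(u) - alpha)(t(u) - beta), for suitable alpha and
  beta, then bounds k = |T|, as in Heden's bounds on the tail of a vector space partition.
\<close>

section \<open>Arithmetic of F_2^n\<close>

definition neg_one_pow :: "bool \<Rightarrow> int" where
  "neg_one_pow P = (if P then -1 else 1)"

lemma neg_one_pow_simps [simp]: "neg_one_pow True = -1" "neg_one_pow False = 1"
  by (simp_all add: neg_one_pow_def)

lemma neg_one_pow_mult: "neg_one_pow P * neg_one_pow Q = neg_one_pow (P \<noteq> Q)"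
  by (simp add: neg_one_pow_def)

lemma vadd_comm: "vadd x y = vadd y x"
  unfolding vadd_def by auto

lemma vadd_assoc: "vadd (vadd x y) z = vadd x (vadd y z)"
  unfolding vadd_def by auto

lemma vadd_zero [simp]: "vadd x vzero = x" "vadd vzero x = x"
  unfolding vadd_def vzero_def by auto

lemma vadd_self [simp]: "vadd x x = vzero"
  unfolding vadd_def vzero_def by auto

lemma vadd_cancel [simp]: "vadd (vadd x y) y = x" "vadd x (vadd x y) = y"
  unfolding vadd_def by auto

lemma vadd_eq_zero_iff: "vadd x y = vzero \<longleftrightarrow> x = y"
  unfolding vadd_def vzero_def by (auto simp: fun_eq_iff)

lemma vadd_vecs [simp]: "x \<in> vecs n \<Longrightarrow> y \<in> vecs n \<Longrightarrow> vadd x y \<in> vecs n"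
  unfolding vecs_def vadd_def by auto

lemma vzero_vecs [simp]: "vzero \<in> vecs n"
  unfolding vecs_def vzero_def by auto

lemma bij_betw_vadd: "a \<in> vecs n \<Longrightarrow> bij_betw (vadd a) (vecs n) (vecs n)"
  by (rule bij_betw_byWitness[where f' = "vadd a"]) (auto simp: vadd_assoc[symmetric])

lemma bij_betw_vecs_Pow: "bij_betw (\<lambda>x. {i. x i}) (vecs n) (Pow {..<n})"
proof (rule bij_betw_byWitness[where f' = "\<lambda>S i. i \<in> S"])
  show "(\<lambda>x. {i. x i}) ` vecs n \<subseteq> Pow {..<n}"
    unfolding vecs_def using not_le by auto
qed (auto simp: vecs_def)

lemma finite_vecs [simp]: "finite (vecs n)"
  using bij_betw_finite bij_betw_vecs_Pow by blast

lemma card_vecs: "card (vecs n) = 2 ^ n"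
  using bij_betw_same_card[OF bij_betw_vecs_Pow] by (simp add: card_Pow)

lemma dotp_comm: "dotp n a x = dotp n x a"
  unfolding dotp_def by (simp add: conj_commute)

lemma dotp_vadd_right: "dotp n a (vadd x y) = (dotp n a x \<noteq> dotp n a y)"
proof -
  have card_eq_sum: "card {i. i < n \<and> P i} = (\<Sum>i<n. of_bool (P i) :: nat)" for P
    by (simp add: lessThan_def Collect_conj_eq)
  have "(\<Sum>i<n. of_bool (a i \<and> x i)) + (\<Sum>i<n. of_bool (a i \<and> y i))
      = (\<Sum>i<n. of_bool (a i \<and> (x i \<noteq> y i))) + 2 * (\<Sum>i<n. of_bool (a i \<and> x i \<and> y i) :: nat)"
    unfolding sum.distrib[symmetric] sum_distrib_left by (rule sum.cong) auto
  moreover have "(p::nat) + q = r + 2 * s \<Longrightarrow> odd r = (odd p \<noteq> odd q)" for p q r s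
    by presburger
  ultimately have "odd (\<Sum>i<n. of_bool (a i \<and> (x i \<noteq> y i)) :: nat)
      = (odd (\<Sum>i<n. of_bool (a i \<and> x i) :: nat) \<noteq> odd (\<Sum>i<n. of_bool (a i \<and> y i) :: nat))"
    by blast
  then show ?thesis
    unfolding dotp_def vadd_def card_eq_sum .
qed

lemma dotp_vadd_left: "dotp n (vadd x y) a = (dotp n x a \<noteq> dotp n y a)"
  using dotp_vadd_right dotp_comm by metis

lemma dotp_vzero [simp]: "dotp n a vzero = False" "dotp n vzero a = False"
  unfolding dotp_def vzero_def by auto

definition unit_vec :: "nat \<Rightarrow> nat \<Rightarrow> bool" where
  "unit_vec i = (\<lambda>j. j = i)"

lemma unit_vec_vecs: "i < n \<Longrightarrow> unit_vec i \<in> vecs n"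
  unfolding unit_vec_def vecs_def by auto

lemma dotp_unit_vec: "i < n \<Longrightarrow> dotp n (unit_vec i) x = x i"
proof -
  assume "i < n"
  then have "{j. j < n \<and> unit_vec i j \<and> x j} = (if x i then {i} else {})"
    unfolding unit_vec_def by auto
  then show ?thesis unfolding dotp_def by simp
qed

lemma vecs_eqI: "x \<in> vecs n \<Longrightarrow> y \<in> vecs n \<Longrightarrow> (\<And>i. i < n \<Longrightarrow> x i = y i) \<Longrightarrow> x = y"
proof
  fix i
  assume "x \<in> vecs n" "y \<in> vecs n" "\<And>i. i < n \<Longrightarrow> x i = y i"
  then show "x i = y i" unfolding vecs_def by (cases "i < n") auto
qed

lemma nonzero_vec_not_orthogonal:
  assumes "a \<in> vecs n" "a \<noteq> vzero"
  obtains u where "u \<in> vecs n" "dotp n u a"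
proof -
  obtain i where "a i" using assms(2) by (auto simp: vzero_def fun_eq_iff)
  with assms(1) have "i < n" unfolding vecs_def using not_le by blast
  with \<open>a i\<close> show ?thesis using that unit_vec_vecs dotp_unit_vec by blast
qed

section \<open>Subspaces and annihilators\<close>

definition is_subspace :: "nat \<Rightarrow> (nat \<Rightarrow> bool) set \<Rightarrow> bool" where
  "is_subspace n S \<longleftrightarrow> S \<subseteq> vecs n \<and> vzero \<in> S \<and> (\<forall>x\<in>S. \<forall>y\<in>S. vadd x y \<in> S)"

definition annihilator :: "nat \<Rightarrow> (nat \<Rightarrow> bool) set \<Rightarrow> (nat \<Rightarrow> bool) set" where
  "annihilator n S = {u \<in> vecs n. \<forall>s\<in>S. \<not> dotp n u s}"

lemma is_subspace_vecs: "is_subspace n (vecs n)"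
  unfolding is_subspace_def by auto

lemma finite_subspace: "is_subspace n S \<Longrightarrow> finite S"
  unfolding is_subspace_def using finite_subset finite_vecs by blast

lemma sum_neg_one_pow_subspace:
  assumes S: "is_subspace n S" and h: "\<And>x y. x \<in> S \<Longrightarrow> y \<in> S \<Longrightarrow> h (vadd x y) = (h x \<noteq> h y)"
  shows "(\<Sum>x\<in>S. neg_one_pow (h x)) = (if \<forall>x\<in>S. \<not> h x then int (card S) else 0)"
proof (cases "\<forall>x\<in>S. \<not> h x")
  case False
  then obtain s where s: "s \<in> S" "h s" by auto
  have "bij_betw (vadd s) S S"
    by (rule bij_betw_byWitness[where f' = "vadd s"]) (use S s in \<open>auto simp: is_subspace_def\<close>)
  then have "(\<Sum>x\<in>S. neg_one_pow (h x)) = (\<Sum>x\<in>S. neg_one_pow (h (vadd s x)))"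
    using sum.reindex_bij_betw[of "vadd s" S S "\<lambda>x. neg_one_pow (h x)"] by simp
  also have "\<dots> = (\<Sum>x\<in>S. - neg_one_pow (h x))"
    using s h S by (intro sum.cong refl) (auto simp: neg_one_pow_def is_subspace_def)
  finally show ?thesis using False by (auto simp: sum_negf)
qed (simp add: neg_one_pow_def)

lemma sum_neg_one_pow_dotp:
  assumes "a \<in> vecs n"
  shows "(\<Sum>u\<in>vecs n. neg_one_pow (dotp n u a)) = (if a = vzero then 2 ^ n else 0)"
proof -
  have "(\<Sum>u\<in>vecs n. neg_one_pow (dotp n u a))
      = (if \<forall>u\<in>vecs n. \<not> dotp n u a then 2 ^ n else 0)"
    using sum_neg_one_pow_subspace[OF is_subspace_vecs] by (simp add: dotp_vadd_left card_vecs)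
  then show ?thesis
    using nonzero_vec_not_orthogonal[OF assms] by (cases "a = vzero") auto
qed

definition character_sum :: "nat \<Rightarrow> (nat \<Rightarrow> bool) set \<Rightarrow> (nat \<Rightarrow> bool) \<Rightarrow> int" where
  "character_sum n A u = (\<Sum>x\<in>A. neg_one_pow (dotp n u x))"

lemma character_sum_subspace:
  "is_subspace n A \<Longrightarrow> character_sum n A u = (if \<forall>x\<in>A. \<not> dotp n u x then int (card A) else 0)"
  unfolding character_sum_def by (rule sum_neg_one_pow_subspace) (simp_all add: dotp_vadd_right)

lemma sum_character_sum:
  assumes "A \<subseteq> vecs n"
  shows "(\<Sum>u\<in>vecs n. character_sum n A u) = (if vzero \<in> A then 2 ^ n else 0)"
proof -
  have "(\<Sum>u\<in>vecs n. character_sum n A u) = (\<Sum>x\<in>A. \<Sum>u\<in>vecs n. neg_one_pow (dotp n u x))"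
    unfolding character_sum_def by (rule sum.swap)
  also have "\<dots> = (\<Sum>x\<in>A. if x = vzero then 2 ^ n else 0)"
    using assms by (intro sum.cong refl sum_neg_one_pow_dotp) auto
  also have "\<dots> = (if vzero \<in> A then 2 ^ n else 0)"
    using finite_subset[OF assms finite_vecs] by (simp add: sum.delta)
  finally show ?thesis .
qed

lemma sum_character_sum_mult:
  assumes "A \<subseteq> vecs n" "C \<subseteq> vecs n"
  shows "(\<Sum>u\<in>vecs n. character_sum n A u * character_sum n C u) = 2 ^ n * int (card (A \<inter> C))"
proof -
  have "(\<Sum>u\<in>vecs n. character_sum n A u * character_sum n C u)
      = (\<Sum>x\<in>A. \<Sum>y\<in>C. \<Sum>u\<in>vecs n. neg_one_pow (dotp n u (vadd x y)))"
    unfolding character_sum_def sum_product neg_one_pow_mult dotp_vadd_right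
    by (subst sum.swap, rule sum.cong[OF refl], rule sum.swap)
  also have "\<dots> = (\<Sum>x\<in>A. \<Sum>y\<in>C. if x = y then 2 ^ n else 0)"
    using assms by (intro sum.cong refl) (auto simp: sum_neg_one_pow_dotp vadd_eq_zero_iff subset_iff)
  also have "\<dots> = 2 ^ n * int (card (A \<inter> C))"
    using finite_subset[OF assms(1) finite_vecs] finite_subset[OF assms(2) finite_vecs]
    by (simp add: sum.delta' sum.If_cases Int_def)
  finally show ?thesis .
qed

lemma card_mult_card_annihilator:
  assumes S: "is_subspace n S"
  shows "card S * card (annihilator n S) = 2 ^ n"
proof -
  have "int (2 ^ n) = (\<Sum>u\<in>vecs n. character_sum n S u)"
    using S by (simp add: sum_character_sum is_subspace_def)
  also have "\<dots> = (\<Sum>u\<in>vecs n. if u \<in> annihilator n S then int (card S) else 0)"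
    using S by (intro sum.cong refl) (simp add: character_sum_subspace annihilator_def)
  also have "\<dots> = int (card S * card (annihilator n S))"
    by (simp add: sum.If_cases annihilator_def Int_def)
  finally show ?thesis
    by (simp only: of_nat_eq_iff)
qed

lemma card_subspace_power_of_two:
  assumes "is_subspace n S"
  obtains d where "card S = 2 ^ d"
  using divides_primepow_nat[OF two_is_prime_nat] card_mult_card_annihilator[OF assms]
  by (metis dvd_triv_left)

section \<open>Quadratic functions\<close>

lemma qform_third_difference:
  "qform n Q (vadd (vadd x y) a) =
     (((((qform n Q (vadd x y) \<noteq> qform n Q (vadd x a)) \<noteq> qform n Q (vadd y a))
       \<noteq> qform n Q x) \<noteq> qform n Q y) \<noteq> qform n Q a)"
proof -
  define P where "P = {(i, j). i < j \<and> j < n \<and> Q i j}"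
  define e where "e z p = (of_bool (z (fst p) \<and> z (snd p)) :: nat)"
    for z :: "nat \<Rightarrow> bool" and p :: "nat \<times> nat"
  have "finite P"
    unfolding P_def by (rule finite_subset[of _ "{..<n} \<times> {..<n}"]) auto
  have qform_sum: "qform n Q z = odd (sum (e z) P)" for z
  proof -
    have "{(i, j). i < j \<and> j < n \<and> Q i j \<and> z i \<and> z j} = P \<inter> {p. z (fst p) \<and> z (snd p)}"
      unfolding P_def by auto
    then show ?thesis
      unfolding qform_def e_def using \<open>finite P\<close> by simp
  qed
  have "even (e (vadd (vadd x y) a) p + e (vadd x y) p + e (vadd x a) p + e (vadd y a) p
      + e x p + e y p + e a p)" for p
    unfolding e_def vadd_def
    by (cases "x (fst p)"; cases "x (snd p)"; cases "y (fst p)"; cases "y (snd p)";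
        cases "a (fst p)"; cases "a (snd p)"; simp)
  then have "even (sum (e (vadd (vadd x y) a)) P + sum (e (vadd x y)) P + sum (e (vadd x a)) P
      + sum (e (vadd y a)) P + sum (e x) P + sum (e y) P + sum (e a) P)"
    unfolding sum.distrib[symmetric] by (simp add: dvd_sum)
  then show ?thesis
    unfolding qform_sum even_add by argo
qed

definition polar_form ::
    "nat \<Rightarrow> ((nat \<Rightarrow> bool) \<Rightarrow> (nat \<Rightarrow> bool)) \<Rightarrow> (nat \<Rightarrow> bool) \<Rightarrow> (nat \<Rightarrow> bool) \<Rightarrow> (nat \<Rightarrow> bool) \<Rightarrow> bool" where
  "polar_form n F b a x =
     ((component n F b (vadd x a) \<noteq> component n F b x) \<noteq> (component n F b a \<noteq> component n F b vzero))"

lemma polar_form_sym: "polar_form n F b a x = polar_form n F b x a"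
  unfolding polar_form_def by (simp only: vadd_comm[of x a]) argo

lemma polar_form_vadd:
  assumes "is_quadratic n F" "b \<in> vecs n" "a \<in> vecs n" "x \<in> vecs n" "y \<in> vecs n"
  shows "polar_form n F b a (vadd x y) = (polar_form n F b a x \<noteq> polar_form n F b a y)"
proof -
  have "\<exists>Q l c. \<forall>z\<in>vecs n. component n F b z = (c \<noteq> (dotp n l z \<noteq> qform n Q z))"
    using assms(1,2) unfolding is_quadratic_def by (rule bspec)
  then obtain Q l c where F_b: "\<forall>z\<in>vecs n. component n F b z = (c \<noteq> (dotp n l z \<noteq> qform n Q z))"
    by (elim exE)
  have "qform n Q vzero = False"
    unfolding qform_def vzero_def by simp
  then show ?thesis
    using qform_third_difference[of n Q x y a] assms(3-5)
    unfolding polar_form_def by (simp add: F_b[rule_format] dotp_vadd_right) argo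
qed

definition linear_space :: "nat \<Rightarrow> ((nat \<Rightarrow> bool) \<Rightarrow> (nat \<Rightarrow> bool)) \<Rightarrow> (nat \<Rightarrow> bool) \<Rightarrow> (nat \<Rightarrow> bool) set" where
  "linear_space n F b = {a \<in> vecs n. \<forall>x\<in>vecs n. \<not> polar_form n F b a x}"

lemma is_subspace_linear_space:
  assumes F: "is_quadratic n F" and b: "b \<in> vecs n"
  shows "is_subspace n (linear_space n F b)"
  unfolding is_subspace_def
proof (intro conjI ballI)
  fix a a' assume a: "a \<in> linear_space n F b" and a': "a' \<in> linear_space n F b"
  then have "a \<in> vecs n" "a' \<in> vecs n"
    unfolding linear_space_def by auto
  with a a' show "vadd a a' \<in> linear_space n F b"
    unfolding linear_space_def using polar_form_vadd[OF F b] polar_form_sym by auto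
qed (auto simp: linear_space_def polar_form_def)

lemma component_vadd_linear_space:
  assumes "a \<in> linear_space n F b" "a' \<in> linear_space n F b"
  shows "(component n F b (vadd a a') \<noteq> component n F b vzero)
     = ((component n F b a \<noteq> component n F b vzero) \<noteq> (component n F b a' \<noteq> component n F b vzero))"
  using assms unfolding linear_space_def polar_form_def by (auto simp: vadd_comm)

lemma card_linear_space_le: "card (linear_space n F b) \<le> 2 ^ n"
  unfolding card_vecs[symmetric] linear_space_def by (rule card_mono) auto

section \<open>Walsh spectrum of a quadratic function\<close>

lemma square_sum_vecs:
  fixes g :: "(nat \<Rightarrow> bool) \<Rightarrow> int"
  shows "(\<Sum>x\<in>vecs n. g x)^2 = (\<Sum>a\<in>vecs n. \<Sum>x\<in>vecs n. g x * g (vadd x a))"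
proof -
  have "(\<Sum>x\<in>vecs n. g x)^2 = (\<Sum>x\<in>vecs n. \<Sum>y\<in>vecs n. g x * g y)"
    by (simp add: power2_eq_square sum_product)
  also have "\<dots> = (\<Sum>x\<in>vecs n. \<Sum>a\<in>vecs n. g x * g (vadd x a))"
  proof (rule sum.cong[OF refl])
    fix x assume "x \<in> vecs n"
    show "(\<Sum>y\<in>vecs n. g x * g y) = (\<Sum>a\<in>vecs n. g x * g (vadd x a))"
      using sum.reindex_bij_betw[OF bij_betw_vadd[OF \<open>x \<in> vecs n\<close>], of "\<lambda>y. g x * g y"] by simp
  qed
  also have "\<dots> = (\<Sum>a\<in>vecs n. \<Sum>x\<in>vecs n. g x * g (vadd x a))"
    by (rule sum.swap)
  finally show ?thesis .
qed

lemma autocorrelation_component: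
  fixes u :: "nat \<Rightarrow> bool"
  assumes F: "is_quadratic n F" and b: "b \<in> vecs n" and a: "a \<in> vecs n"
  defines "s \<equiv> \<lambda>x. neg_one_pow (component n F b x \<noteq> dotp n x u)"
  shows "(\<Sum>x\<in>vecs n. s x * s (vadd x a)) =
    (if a \<in> linear_space n F b
     then 2 ^ n * neg_one_pow ((component n F b a \<noteq> component n F b vzero) \<noteq> dotp n a u)
     else 0)"
proof -
  have "s x * s (vadd x a) =
      neg_one_pow ((component n F b a \<noteq> component n F b vzero) \<noteq> dotp n a u)
      * neg_one_pow (polar_form n F b a x)" for x
    unfolding s_def neg_one_pow_mult polar_form_def dotp_vadd_left by (rule arg_cong) argo
  moreover have "(\<Sum>x\<in>vecs n. neg_one_pow (polar_form n F b a x))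
      = (if a \<in> linear_space n F b then 2 ^ n else 0)"
    using sum_neg_one_pow_subspace[OF is_subspace_vecs, where h = "polar_form n F b a"]
      polar_form_vadd[OF F b a] a
    by (simp add: linear_space_def card_vecs)
  ultimately show ?thesis
    by (simp add: sum_distrib_left[symmetric])
qed

lemma walsh_square_eq_sum:
  assumes F: "is_quadratic n F" and b: "b \<in> vecs n"
  shows "(walsh n F b u)^2 = 2 ^ n *
    (\<Sum>a\<in>linear_space n F b. neg_one_pow ((component n F b a \<noteq> component n F b vzero) \<noteq> dotp n a u))"
proof -
  have "walsh n F b u = (\<Sum>x\<in>vecs n. neg_one_pow (component n F b x \<noteq> dotp n x u))"
    unfolding walsh_def neg_one_pow_def ..
  then have "(walsh n F b u)^2 = (\<Sum>a\<in>vecs n. if a \<in> linear_space n F b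
      then 2 ^ n * neg_one_pow ((component n F b a \<noteq> component n F b vzero) \<noteq> dotp n a u) else 0)"
    by (simp only: square_sum_vecs autocorrelation_component[OF F b] cong: sum.cong)
  also have "\<dots> = (\<Sum>a\<in>linear_space n F b.
      2 ^ n * neg_one_pow ((component n F b a \<noteq> component n F b vzero) \<noteq> dotp n a u))"
    by (simp add: sum.If_cases Int_def linear_space_def)
  finally show ?thesis
    by (simp add: sum_distrib_left)
qed

lemma sum_linear_space_phase:
  assumes F: "is_quadratic n F" and b: "b \<in> vecs n"
  shows "(\<Sum>a\<in>linear_space n F b. neg_one_pow ((component n F b a \<noteq> component n F b vzero) \<noteq> dotp n a u))
    = (if \<forall>a\<in>linear_space n F b. (component n F b a \<noteq> component n F b vzero) = dotp n a u
       then int (card (linear_space n F b)) else 0)"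
proof -
  have "(\<Sum>a\<in>linear_space n F b. neg_one_pow ((component n F b a \<noteq> component n F b vzero) \<noteq> dotp n a u))
    = (if \<forall>a\<in>linear_space n F b. \<not> ((component n F b a \<noteq> component n F b vzero) \<noteq> dotp n a u)
       then int (card (linear_space n F b)) else 0)"
    by (rule sum_neg_one_pow_subspace[OF is_subspace_linear_space[OF F b]])
      (simp only: component_vadd_linear_space dotp_vadd_left, argo)
  then show ?thesis
    by simp
qed

lemma walsh_square:
  assumes F: "is_quadratic n F" and b: "b \<in> vecs n"
  shows "(walsh n F b u)^2 =
    (if \<forall>a\<in>linear_space n F b. (component n F b a \<noteq> component n F b vzero) = dotp n a u
     then 2 ^ n * int (card (linear_space n F b)) else 0)"
  using walsh_square_eq_sum[OF F b] sum_linear_space_phase[OF F b] by simp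

text \<open>Summing the phase sums over all u, only a = 0 survives, so some phase sum is nonzero.\<close>
lemma exists_walsh_support:
  assumes F: "is_quadratic n F" and b: "b \<in> vecs n"
  obtains u where "u \<in> vecs n"
    "\<forall>a\<in>linear_space n F b. (component n F b a \<noteq> component n F b vzero) = dotp n a u"
proof -
  define V where "V = linear_space n F b"
  define p where "p a = (component n F b a \<noteq> component n F b vzero)" for a
  have V: "is_subspace n V"
    unfolding V_def by (rule is_subspace_linear_space[OF F b])
  have "(\<Sum>u\<in>vecs n. \<Sum>a\<in>V. neg_one_pow (p a \<noteq> dotp n a u))
      = (\<Sum>a\<in>V. neg_one_pow (p a) * (\<Sum>u\<in>vecs n. neg_one_pow (dotp n u a)))"
    by (subst sum.swap) (simp add: sum_distrib_left neg_one_pow_mult dotp_comm)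
  also have "\<dots> = (\<Sum>a\<in>V. if a = vzero then 2 ^ n else 0)"
    using V by (intro sum.cong refl) (auto simp: sum_neg_one_pow_dotp is_subspace_def p_def subset_iff)
  also have "\<dots> = 2 ^ n"
    using V finite_subspace[OF V] by (simp add: is_subspace_def)
  finally have "(\<Sum>u\<in>vecs n. \<Sum>a\<in>V. neg_one_pow (p a \<noteq> dotp n a u)) \<noteq> 0"
    by simp
  then obtain u where "u \<in> vecs n" "(\<Sum>a\<in>V. neg_one_pow (p a \<noteq> dotp n a u)) \<noteq> 0"
    by (rule sum.not_neutral_contains_not_neutral)
  then show ?thesis
    using that sum_linear_space_phase[OF F b, of u] unfolding V_def p_def by (auto split: if_splits)
qed

definition linear_dim :: "nat \<Rightarrow> ((nat \<Rightarrow> bool) \<Rightarrow> (nat \<Rightarrow> bool)) \<Rightarrow> (nat \<Rightarrow> bool) \<Rightarrow> nat" where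
  "linear_dim n F b = (THE d. card (linear_space n F b) = 2 ^ d)"

lemma card_linear_space:
  assumes "is_quadratic n F" "b \<in> vecs n"
  shows "card (linear_space n F b) = 2 ^ linear_dim n F b"
proof -
  obtain d where d: "card (linear_space n F b) = 2 ^ d"
    using card_subspace_power_of_two[OF is_subspace_linear_space[OF assms]] .
  then have "linear_dim n F b = d"
    unfolding linear_dim_def by (rule the_equality) (simp_all add: d)
  with d show ?thesis by simp
qed

lemma linear_dim_le:
  assumes "is_quadratic n F" "b \<in> vecs n"
  shows "linear_dim n F b \<le> n"
proof -
  have "(2::nat) ^ linear_dim n F b \<le> 2 ^ n"
    using card_linear_space_le[of n F b] card_linear_space[OF assms] by simp
  then show ?thesis
    by simp
qed

lemma powr_half_square: "(2 powr ((real n + real d) / 2))^2 = (2::real) ^ (n + d)"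
  by (simp add: powr_powr[symmetric] powr_realpow[symmetric] power2_eq_square powr_add[symmetric])

lemma amplitude_eq:
  assumes F: "is_quadratic n F" and b: "b \<in> vecs n"
  shows "amplitude n F b = 2 powr ((real n + real (linear_dim n F b)) / 2)"
proof -
  obtain u where u: "u \<in> vecs n"
      "\<forall>a\<in>linear_space n F b. (component n F b a \<noteq> component n F b vzero) = dotp n a u"
    using exists_walsh_support[OF F b] .
  define M where "M = \<bar>walsh n F b u\<bar>"
  have M_sq: "M^2 = 2 ^ (n + linear_dim n F b)"
    unfolding M_def power2_abs walsh_square[OF F b] card_linear_space[OF F b] using u(2)
    by (simp add: power_add)
  have "\<bar>walsh n F b v\<bar> \<le> M" if "v \<in> vecs n" for v
    unfolding M_def abs_le_square_iff walsh_square[OF F b] using u(2) by simp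
  then have "Max {\<bar>walsh n F b a\<bar> | a. a \<in> vecs n} = M"
    using u(1) unfolding M_def by (intro Max_eqI) (auto simp: setcompr_eq_image)
  then have "amplitude n F b = real_of_int M"
    unfolding amplitude_def by simp
  moreover have "(real_of_int M)^2 = (2 powr ((real n + real (linear_dim n F b)) / 2))^2"
    unfolding powr_half_square using arg_cong[OF M_sq, of real_of_int] by simp
  moreover have "real_of_int M \<ge> 0"
    unfolding M_def by simp
  ultimately show ?thesis
    by (simp add: power2_eq_iff_nonneg)
qed

section \<open>APN functions\<close>

definition polar_map ::
    "((nat \<Rightarrow> bool) \<Rightarrow> (nat \<Rightarrow> bool)) \<Rightarrow> (nat \<Rightarrow> bool) \<Rightarrow> (nat \<Rightarrow> bool) \<Rightarrow> (nat \<Rightarrow> bool)" where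
  "polar_map F a x = vadd (vadd (F (vadd x a)) (F x)) (vadd (F a) (F vzero))"

lemma dotp_polar_map: "dotp n b (polar_map F a x) = polar_form n F b a x"
  unfolding polar_map_def polar_form_def component_def dotp_vadd_right ..

lemma polar_map_vecs:
  "\<forall>x\<in>vecs n. F x \<in> vecs n \<Longrightarrow> a \<in> vecs n \<Longrightarrow> x \<in> vecs n \<Longrightarrow> polar_map F a x \<in> vecs n"
  unfolding polar_map_def by simp

lemma polar_map_vadd:
  assumes F: "is_quadratic n F" "\<forall>x\<in>vecs n. F x \<in> vecs n"
    and a: "a \<in> vecs n" and x: "x \<in> vecs n" and y: "y \<in> vecs n"
  shows "polar_map F a (vadd x y) = vadd (polar_map F a x) (polar_map F a y)"
proof (rule vecs_eqI)
  fix i assume "i < n"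
  then show "polar_map F a (vadd x y) i = vadd (polar_map F a x) (polar_map F a y) i"
    using polar_form_vadd[OF F(1) unit_vec_vecs a x y]
    by (simp add: dotp_unit_vec[symmetric] dotp_polar_map vadd_def)
qed (use assms in \<open>simp_all add: polar_map_vecs\<close>)

text \<open>The zeros of the polar map are the solutions of F(x) + F(x + a) = F(0) + F(a),
  of which there are at most two.\<close>
lemma polar_map_eq_zero_iff:
  assumes APN: "is_APN n F" and F: "\<forall>x\<in>vecs n. F x \<in> vecs n"
    and a: "a \<in> vecs n" "a \<noteq> vzero" and x: "x \<in> vecs n"
  shows "polar_map F a x = vzero \<longleftrightarrow> x = vzero \<or> x = a"
proof -
  define K where "K = {z \<in> vecs n. vadd (F z) (F (vadd z a)) = vadd (F vzero) (F a)}"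
  have "card K \<le> 2"
    using APN a F unfolding is_APN_def K_def by simp
  moreover have sub: "{vzero, a} \<subseteq> K" and "card {vzero, a} = 2"
    using a unfolding K_def by (auto simp: vadd_comm)
  moreover have fin: "finite K"
    unfolding K_def by simp
  ultimately have "K = {vzero, a}"
    using card_subset_eq[OF fin sub] card_mono[OF fin sub] by simp
  moreover have "polar_map F a x = vzero \<longleftrightarrow> x \<in> K"
    unfolding polar_map_def K_def vadd_eq_zero_iff using x by (auto simp: vadd_comm)
  ultimately show ?thesis
    by simp
qed

lemma card_kernel_mult_card_image:
  assumes G_vadd: "\<And>x y. x \<in> vecs n \<Longrightarrow> y \<in> vecs n \<Longrightarrow> G (vadd x y) = vadd (G x) (G y)"
  shows "card {x \<in> vecs n. G x = vzero} * card (G ` vecs n) = 2 ^ n"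
proof -
  define K where "K = {x \<in> vecs n. G x = vzero}"
  have card_fibre: "card {x \<in> vecs n. G x = G z} = card K" if z: "z \<in> vecs n" for z
  proof -
    have "{x \<in> vecs n. G x = G z} = vadd z ` K"
    proof (intro equalityI subsetI)
      fix x assume "x \<in> {x \<in> vecs n. G x = G z}"
      then have "vadd z x \<in> K"
        using z G_vadd[OF z] unfolding K_def by simp
      then show "x \<in> vadd z ` K"
        by (rule rev_image_eqI) simp
    qed (use z G_vadd[OF z] in \<open>auto simp: K_def\<close>)
    moreover have "inj (vadd z)"
      by (rule inj_on_inverseI[where g = "vadd z"]) simp
    ultimately show ?thesis
      by (simp add: card_image inj_on_subset)
  qed
  have "card (vecs n) = (\<Sum>y\<in>G ` vecs n. card {x \<in> vecs n. G x = y})"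
    using sum.image_gen[OF finite_vecs, where h = "\<lambda>_. 1 :: nat" and g = G] by simp
  also have "\<dots> = (\<Sum>y\<in>G ` vecs n. card K)"
    using card_fibre by (intro sum.cong) auto
  finally show ?thesis
    unfolding K_def card_vecs by simp
qed

lemma is_subspace_image:
  assumes G_vecs: "\<And>x. x \<in> vecs n \<Longrightarrow> G x \<in> vecs m"
    and G_vadd: "\<And>x y. x \<in> vecs n \<Longrightarrow> y \<in> vecs n \<Longrightarrow> G (vadd x y) = vadd (G x) (G y)"
  shows "is_subspace m (G ` vecs n)"
  unfolding is_subspace_def
proof (intro conjI ballI)
  have "G vzero = vzero"
    using G_vadd[of vzero vzero] by simp
  then show "vzero \<in> G ` vecs n"
    by (rule image_eqI[where x = vzero, OF sym]) simp
  fix u v assume "u \<in> G ` vecs n" "v \<in> G ` vecs n"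
  then obtain x y where "x \<in> vecs n" "y \<in> vecs n" "u = G x" "v = G y"
    by blast
  then show "vadd u v \<in> G ` vecs n"
    using G_vadd by (intro image_eqI[where x = "vadd x y"]) simp_all
qed (use G_vecs in auto)

lemma linear_spaces_partition:
  assumes APN: "is_APN n F" and F: "is_quadratic n F" "\<forall>x\<in>vecs n. F x \<in> vecs n"
    and a: "a \<in> vecs n" "a \<noteq> vzero"
  shows "card {b \<in> vecs n. b \<noteq> vzero \<and> a \<in> linear_space n F b} = 1"
proof -
  define G where "G = polar_map F a"
  have G_vecs: "\<And>x. x \<in> vecs n \<Longrightarrow> G x \<in> vecs n"
    unfolding G_def using F(2) a by (simp add: polar_map_vecs)
  have G_vadd: "\<And>x y. x \<in> vecs n \<Longrightarrow> y \<in> vecs n \<Longrightarrow> G (vadd x y) = vadd (G x) (G y)"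
    unfolding G_def using polar_map_vadd[OF F a(1)] .
  have "{x \<in> vecs n. G x = vzero} = {vzero, a}"
    unfolding G_def using polar_map_eq_zero_iff[OF APN F(2) a] a by auto
  then have image: "card (G ` vecs n) * 2 = 2 ^ n"
    using card_kernel_mult_card_image[of n G, OF G_vadd] a(2) by simp
  moreover have "card (G ` vecs n) * card (annihilator n (G ` vecs n)) = 2 ^ n"
    by (rule card_mult_card_annihilator[OF is_subspace_image[OF G_vecs G_vadd]])
  moreover have "card (G ` vecs n) \<noteq> 0"
    using image by (intro notI) simp
  ultimately have "card (annihilator n (G ` vecs n)) = 2"
    by (metis mult_left_cancel)
  moreover have "{b \<in> vecs n. b \<noteq> vzero \<and> a \<in> linear_space n F b} = annihilator n (G ` vecs n) - {vzero}"
    using a(1) unfolding G_def annihilator_def linear_space_def by (auto simp: dotp_polar_map)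
  moreover have "vzero \<in> annihilator n (G ` vecs n)"
    unfolding annihilator_def by simp
  ultimately show ?thesis
    by (simp add: annihilator_def)
qed

section \<open>Vector space partitions\<close>

locale vector_space_partition =
  fixes n :: nat and B :: "'b set" and V :: "'b \<Rightarrow> (nat \<Rightarrow> bool) set"
  assumes finite_index: "finite B"
    and subspace: "b \<in> B \<Longrightarrow> is_subspace n (V b)"
    and covers_once: "x \<in> vecs n \<Longrightarrow> x \<noteq> vzero \<Longrightarrow> card {b \<in> B. x \<in> V b} = 1"
begin

lemma subset_vecs: "b \<in> B \<Longrightarrow> V b \<subseteq> vecs n"
  using subspace unfolding is_subspace_def by blast

lemma vzero_mem: "b \<in> B \<Longrightarrow> vzero \<in> V b"
  using subspace unfolding is_subspace_def by blast

lemma inter_eq_vzero: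
  assumes "b \<in> B" "b' \<in> B" "b \<noteq> b'"
  shows "V b \<inter> V b' = {vzero}"
proof (rule ccontr)
  assume "V b \<inter> V b' \<noteq> {vzero}"
  then obtain x where x: "x \<in> V b" "x \<in> V b'" "x \<noteq> vzero"
    using assms vzero_mem by blast
  then have "{b, b'} \<subseteq> {c \<in> B. x \<in> V c}"
    using assms by auto
  then have "2 \<le> card {c \<in> B. x \<in> V c}"
    using card_mono[OF _ \<open>{b, b'} \<subseteq> _\<close>] finite_index assms(3) by simp
  then show False
    using covers_once x subset_vecs[OF assms(1)] by fastforce
qed

lemma UN_minus_vzero: "(\<Union>b\<in>B. V b - {vzero}) = vecs n - {vzero}"
proof (intro equalityI subsetI)
  fix x assume x: "x \<in> vecs n - {vzero}"
  then have "card {b \<in> B. x \<in> V b} = 1"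
    using covers_once by blast
  then obtain b where "{b \<in> B. x \<in> V b} = {b}"
    by (rule card_1_singletonE)
  then show "x \<in> (\<Union>b\<in>B. V b - {vzero})"
    using x by blast
qed (use subset_vecs in blast)

lemma sum_character_sum_index:
  assumes u: "u \<in> vecs n"
  shows "(\<Sum>b\<in>B. character_sum n (V b) u) = int (card B) - 1 + (if u = vzero then 2 ^ n else 0)"
proof -
  define g where "g x = neg_one_pow (dotp n u x)" for x
  have fin: "finite (V b)" if "b \<in> B" for b
    using finite_subset[OF subset_vecs[OF that] finite_vecs] .
  have "(\<Sum>b\<in>B. character_sum n (V b) u) = (\<Sum>b\<in>B. 1 + (\<Sum>x\<in>V b - {vzero}. g x))"
    unfolding character_sum_def g_def[symmetric]
    using fin vzero_mem by (intro sum.cong refl) (subst sum.remove[where x = vzero]; simp add: g_def)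
  also have "\<dots> = int (card B) + (\<Sum>x\<in>(\<Union>b\<in>B. V b - {vzero}). g x)"
    using fin finite_index inter_eq_vzero by (subst sum.UNION_disjoint) (auto simp: sum.distrib)
  also have "\<dots> = int (card B) + ((\<Sum>x\<in>vecs n. g x) - 1)"
    unfolding UN_minus_vzero by (simp add: sum_diff1 g_def)
  finally show ?thesis
    using sum_neg_one_pow_dotp[OF u] by (simp add: g_def dotp_comm)
qed

text \<open>In Heden's terminology the tail of a partition is the set of its members of least
  nontrivial dimension.\<close>
definition tail :: "nat \<Rightarrow> 'b set" where
  "tail d = {b \<in> B. card (V b) = 2 ^ d}"

definition tail_count :: "nat \<Rightarrow> (nat \<Rightarrow> bool) \<Rightarrow> nat" where
  "tail_count d u = card {b \<in> tail d. \<forall>x\<in>V b. \<not> dotp n u x}"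

lemma finite_tail: "finite (tail d)"
  unfolding tail_def using finite_index by simp

lemma tail_subset: "tail d \<subseteq> B"
  unfolding tail_def by blast

lemma tail_count_le: "tail_count d u \<le> card (tail d)"
  unfolding tail_count_def by (rule card_mono[OF finite_tail]) blast

lemma tail_count_vzero: "tail_count d vzero = card (tail d)"
  unfolding tail_count_def by simp

lemma sum_character_sum_tail:
  "(\<Sum>b\<in>tail d. character_sum n (V b) u) = 2 ^ d * int (tail_count d u)"
proof -
  have "(\<Sum>b\<in>tail d. character_sum n (V b) u) = (\<Sum>b\<in>tail d. 2 ^ d * of_bool (\<forall>x\<in>V b. \<not> dotp n u x))"
    using tail_subset by (intro sum.cong refl) (auto simp: character_sum_subspace subspace tail_def)
  then show ?thesis
    unfolding tail_count_def using finite_tail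
    by (simp add: sum_distrib_left[symmetric] Int_def)
qed

lemma first_moment:
  "2 ^ d * (\<Sum>u\<in>vecs n. int (tail_count d u)) = int (card (tail d)) * 2 ^ n"
proof -
  have "2 ^ d * (\<Sum>u\<in>vecs n. int (tail_count d u)) = (\<Sum>b\<in>tail d. \<Sum>u\<in>vecs n. character_sum n (V b) u)"
    by (simp add: sum_distrib_left sum_character_sum_tail[symmetric] sum.swap[of _ "tail d"])
  also have "\<dots> = (\<Sum>b\<in>tail d. 2 ^ n)"
    by (intro sum.cong refl) (auto simp: sum_character_sum subset_vecs vzero_mem tail_def)
  finally show ?thesis
    by simp
qed

lemma second_moment:
  "(2 ^ d)^2 * (\<Sum>u\<in>vecs n. int (tail_count d u) ^ 2)
     = 2 ^ n * int (card (tail d)) * (2 ^ d + int (card (tail d)) - 1)"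
proof -
  have "(2 ^ d)^2 * (\<Sum>u\<in>vecs n. int (tail_count d u) ^ 2)
      = (\<Sum>u\<in>vecs n. (\<Sum>b\<in>tail d. character_sum n (V b) u)^2)"
    by (simp add: sum_character_sum_tail sum_distrib_left power_mult_distrib)
  also have "\<dots> = (\<Sum>b\<in>tail d. \<Sum>b'\<in>tail d. \<Sum>u\<in>vecs n. character_sum n (V b) u * character_sum n (V b') u)"
    unfolding power2_eq_square sum_product
    by (subst sum.swap, rule sum.cong[OF refl], rule sum.swap)
  also have "\<dots> = (\<Sum>b\<in>tail d. \<Sum>b'\<in>tail d. 2 ^ n * (1 + (if b = b' then 2 ^ d - 1 else 0)))"
    using tail_subset inter_eq_vzero
    by (intro sum.cong refl) (auto simp: sum_character_sum_mult subset_vecs tail_def)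
  also have "\<dots> = (\<Sum>b\<in>tail d. 2 ^ n * (2 ^ d + int (card (tail d)) - 1))"
    using finite_tail by (intro sum.cong refl) (simp add: sum_distrib_left[symmetric] sum.distrib)
  finally show ?thesis
    by simp
qed

lemma tail_moment:
  fixes d :: nat and \<alpha> \<beta> :: int
  defines "k \<equiv> int (card (tail d))"
  shows "(2 ^ d)^2 * (\<Sum>u\<in>vecs n. (int (tail_count d u) - \<alpha>) * (int (tail_count d u) - \<beta>))
    = 2 ^ n * (k * (2 ^ d + k - 1) - (\<alpha> + \<beta>) * 2 ^ d * k + \<alpha> * \<beta> * (2 ^ d)^2)"
proof -
  define S1 where "S1 = (\<Sum>u\<in>vecs n. int (tail_count d u))"
  define S2 where "S2 = (\<Sum>u\<in>vecs n. int (tail_count d u) ^ 2)"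
  have expand: "(\<Sum>u\<in>vecs n. (int (tail_count d u) - \<alpha>) * (int (tail_count d u) - \<beta>))
      = S2 - (\<alpha> + \<beta>) * S1 + \<alpha> * \<beta> * 2 ^ n"
    unfolding S1_def S2_def
    by (simp add: algebra_simps power2_eq_square sum.distrib sum_subtractf sum_distrib_left card_vecs)
  have "(2 ^ d)^2 * (\<Sum>u\<in>vecs n. (int (tail_count d u) - \<alpha>) * (int (tail_count d u) - \<beta>))
      = (2 ^ d)^2 * S2 - (\<alpha> + \<beta>) * 2 ^ d * (2 ^ d * S1) + \<alpha> * \<beta> * 2 ^ n * (2 ^ d)^2"
    unfolding expand by (simp add: algebra_simps power2_eq_square)
  also have "\<dots> = 2 ^ n * k * (2 ^ d + k - 1) - (\<alpha> + \<beta>) * 2 ^ d * (k * 2 ^ n) + \<alpha> * \<beta> * 2 ^ n * (2 ^ d)^2"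
    unfolding S1_def S2_def k_def first_moment second_moment ..
  finally show ?thesis
    by (simp add: algebra_simps)
qed

lemma character_sum_diff_dvd:
  assumes b: "b \<in> B" and "card (V b) = 1 \<or> 2 ^ e dvd card (V b)"
  shows "2 ^ e dvd character_sum n (V b) u - character_sum n (V b) vzero"
proof (cases "card (V b) = 1")
  case True
  then obtain x where "V b = {x}"
    by (rule card_1_singletonE)
  moreover have "vzero \<in> V b"
    using b vzero_mem by blast
  ultimately show ?thesis
    by (simp add: character_sum_def)
next
  case False
  then have "int (2 ^ e) dvd int (card (V b))"
    using assms(2) by (simp only: of_nat_dvd_iff simp_thms)
  then show ?thesis
    using b subspace by (simp add: character_sum_subspace)
qed

lemma tail_count_congruence:
  assumes classes: "\<forall>b\<in>B. card (V b) = 1 \<or> card (V b) = 2 ^ d1 \<or> 2 ^ d2 dvd card (V b)"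
    and "d1 < d2" "d2 \<le> n" and u: "u \<in> vecs n"
  shows "2 ^ (d2 - d1) dvd int (tail_count d1 u) - int (card (tail d1))"
proof -
  let ?\<delta> = "\<lambda>b. character_sum n (V b) u - character_sum n (V b) vzero"
  have "(\<Sum>b\<in>B. ?\<delta> b) = (if u = vzero then 2 ^ n else 0) - 2 ^ n"
    using sum_character_sum_index[OF u] sum_character_sum_index[OF vzero_vecs]
    by (simp add: sum_subtractf)
  moreover have "(2::int) ^ d2 dvd 2 ^ n"
    using \<open>d2 \<le> n\<close> by (simp add: le_imp_power_dvd)
  ultimately have "2 ^ d2 dvd (\<Sum>b\<in>B. ?\<delta> b)"
    by auto
  moreover have "2 ^ d2 dvd (\<Sum>b\<in>B - tail d1. ?\<delta> b)"
    using classes unfolding tail_def by (intro dvd_sum character_sum_diff_dvd) auto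
  ultimately have "2 ^ d2 dvd (\<Sum>b\<in>tail d1. ?\<delta> b)"
    using sum.subset_diff[OF tail_subset[of d1] finite_index, of ?\<delta>] by (simp add: dvd_add_right_iff)
  then have "2 ^ d1 * 2 ^ (d2 - d1) dvd 2 ^ d1 * (int (tail_count d1 u) - int (card (tail d1)))"
    using \<open>d1 < d2\<close> by (simp add: sum_subtractf sum_character_sum_tail tail_count_vzero
        right_diff_distrib power_add[symmetric])
  then show ?thesis
    by simp
qed

end

section \<open>Bounds on the tail\<close>

definition tail_bounds :: "nat \<Rightarrow> nat \<Rightarrow> nat \<Rightarrow> bool" where
  "tail_bounds d1 d2 k \<longleftrightarrow>
     (\<not> 2 ^ (d2 - d1) dvd k \<and> d2 < 2 * d1 \<longrightarrow> k \<ge> 2 ^ d1 + 1)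
   \<and> (\<not> 2 ^ (d2 - d1) dvd k \<and> d2 \<ge> 2 * d1 \<longrightarrow>
        (d1 dvd d2 \<and> k = (2 ^ d2 - 1) div (2 ^ d1 - 1)) \<or> k > 2 * 2 ^ (d2 - d1))
   \<and> (2 ^ (d2 - d1) dvd k \<and> d2 \<le> 2 * d1 \<longrightarrow> k \<ge> 2 ^ d2 - 2 ^ d1 + 2 ^ (d2 - d1))
   \<and> (2 ^ (d2 - d1) dvd k \<and> d2 \<ge> 2 * d1 \<longrightarrow> k \<ge> 2 ^ d2)"

lemma power_two_minus_one_dvd_mult: "(2::nat) ^ a - 1 dvd 2 ^ (a * q) - 1"
proof (induction q)
  case (Suc q)
  have "(2::nat) ^ (a * Suc q) - 1 = 2 ^ a * (2 ^ (a * q) - 1) + (2 ^ a - 1)"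
    by (simp add: power_add diff_mult_distrib2)
  moreover have "(2::nat) ^ a - 1 dvd 2 ^ a * (2 ^ (a * q) - 1) + (2 ^ a - 1)"
    using Suc.IH by (intro dvd_add dvd_mult) simp_all
  ultimately show ?case
    by (simp only:)
qed simp

lemma power_two_minus_one_dvd_imp_dvd:
  assumes "0 < a" "(2::nat) ^ a - 1 dvd 2 ^ b - 1"
  shows "a dvd b"
proof -
  define r where "r = b mod a"
  have split: "(2::nat) ^ b - 1 = 2 ^ r * (2 ^ (a * (b div a)) - 1) + (2 ^ r - 1)"
    by (simp add: r_def power_add[symmetric] diff_mult_distrib2 mult.commute[of a])
  have "(2::nat) ^ a - 1 dvd 2 ^ r * (2 ^ (a * (b div a)) - 1)"
    by (rule dvd_mult[OF power_two_minus_one_dvd_mult])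
  then have "(2::nat) ^ a - 1 dvd 2 ^ r - 1"
    using assms(2) unfolding split by (simp only: dvd_add_right_iff)
  moreover have "(2::nat) ^ r - 1 < 2 ^ a - 1"
  proof -
    have "(2::nat) ^ r < 2 ^ a"
      using assms(1) unfolding r_def by simp
    then show ?thesis
      using one_le_power[of "2::nat" r] by linarith
  qed
  ultimately have "\<not> 0 < (2::nat) ^ r - 1"
    using nat_dvd_not_less by blast
  then have "r = 0"
    using one_less_power[of "2::nat" r] by linarith
  then show ?thesis
    unfolding r_def by auto
qed

lemma dvd_less_imp_add_le:
  assumes "(D::nat) dvd m" "D dvd k" "m < k"
  shows "m + D \<le> k"
proof -
  obtain i j where "m = D * i" "k = D * j"
    using assms(1,2) by (elim dvdE)
  moreover from this have "i < j"
    using assms(3) by simp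
  ultimately show ?thesis
    using mult_le_mono2[of "Suc i" j D] by simp
qed

lemma mersenne_quotient:
  fixes d1 d2 k :: nat
  assumes "1 \<le> d1" and eq: "k * (2 ^ d1 - 1) = 2 ^ d2 - 1"
  shows "d1 dvd d2 \<and> k = (2 ^ d2 - 1) div (2 ^ d1 - 1)"
proof -
  have "2 ^ d1 - 1 dvd (2::nat) ^ d2 - 1"
    unfolding eq[symmetric] by (rule dvd_triv_right)
  then have "d1 dvd d2"
    using \<open>1 \<le> d1\<close> power_two_minus_one_dvd_imp_dvd[of d1 d2] by simp
  moreover have "(0::nat) < 2 ^ d1 - 1"
    using \<open>1 \<le> d1\<close> one_less_power[of "2::nat" d1] by simp
  ultimately show ?thesis
    unfolding eq[symmetric] by simp
qed

lemma tail_bound_dvd_le_double: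
  fixes d1 d2 k :: nat
  assumes "2 ^ (d2 - d1) dvd k" "2 ^ d2 - 2 ^ d1 < k" "d1 < d2" "d2 \<le> 2 * d1"
  shows "2 ^ d2 - 2 ^ d1 + 2 ^ (d2 - d1) \<le> k"
proof (rule dvd_less_imp_add_le[OF _ assms(1,2)])
  have "(2::nat) ^ (d2 - d1) dvd 2 ^ d1"
    using assms(4) by (intro le_imp_power_dvd) linarith
  moreover have "(2::nat) ^ d2 = 2 ^ (d2 - d1) * 2 ^ d1"
    using \<open>d1 < d2\<close> by (simp add: power_add[symmetric])
  ultimately show "2 ^ (d2 - d1) dvd (2::nat) ^ d2 - 2 ^ d1"
    by (simp add: dvd_diff_nat)
qed

lemma tail_bound_dvd_ge_double:
  fixes d1 d2 k :: nat
  assumes "2 ^ (d2 - d1) dvd k" "2 ^ d2 - 2 ^ d1 < k" "d1 < d2" "2 * d1 \<le> d2"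
  shows "2 ^ d2 \<le> k"
proof -
  define D :: nat where "D = 2 ^ (d2 - d1)"
  have d2_eq: "2 ^ d2 = D * 2 ^ d1"
    unfolding D_def using \<open>d1 < d2\<close> by (simp add: power_add[symmetric])
  have "2 ^ d1 \<le> D"
    unfolding D_def using assms(4) by (intro power_increasing) linarith+
  then have "2 ^ d2 - D < k"
    using diff_le_mono2[of "2 ^ d1" D "2 ^ d2"] assms(2) by simp
  moreover have "D dvd 2 ^ d2 - D" "D dvd k"
    using assms(1) unfolding d2_eq D_def by (simp_all add: dvd_diff_nat)
  ultimately have "2 ^ d2 - D + D \<le> k"
    by (intro dvd_less_imp_add_le)
  then show ?thesis
    using d2_eq by simp
qed

lemma tail_bounds_intro:
  fixes d1 d2 k :: nat
  assumes "1 \<le> d1" "d1 < d2"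
    and nondvd_lower: "\<not> 2 ^ (d2 - d1) dvd k \<Longrightarrow> 2 ^ d1 < k"
    and nondvd_small: "\<not> 2 ^ (d2 - d1) dvd k \<Longrightarrow> k \<le> 2 * 2 ^ (d2 - d1) \<Longrightarrow> k * (2 ^ d1 - 1) = 2 ^ d2 - 1"
    and dvd_lower: "2 ^ (d2 - d1) dvd k \<Longrightarrow> 2 ^ d2 - 2 ^ d1 < k"
  shows "tail_bounds d1 d2 k"
  unfolding tail_bounds_def
  using nondvd_lower mersenne_quotient[OF \<open>1 \<le> d1\<close> nondvd_small]
    tail_bound_dvd_le_double[OF _ dvd_lower \<open>d1 < d2\<close>] tail_bound_dvd_ge_double[OF _ dvd_lower \<open>d1 < d2\<close>]
  by (auto simp: not_less)

lemma int_power_two_dvd_iff: "(2::int) ^ e dvd int k \<longleftrightarrow> 2 ^ e dvd k"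
  using of_nat_dvd_iff[of "2 ^ e" k, where 'a = int] by simp

locale tail_congruence = vector_space_partition +
  fixes d e :: nat
  assumes tail_count_cong: "u \<in> vecs n \<Longrightarrow> 2 ^ e dvd int (tail_count d u) - int (card (tail d))"
begin

lemma tail_count_nonzero:
  assumes "\<not> 2 ^ e dvd card (tail d)" "u \<in> vecs n"
  shows "tail_count d u \<noteq> 0"
proof
  assume "tail_count d u = 0"
  then have "(2::int) ^ e dvd int (card (tail d))"
    using tail_count_cong[OF assms(2)] by simp
  then show False
    using assms(1) by (simp add: int_power_two_dvd_iff)
qed

lemma tail_count_two_values:
  assumes nondvd: "\<not> 2 ^ e dvd card (tail d)" and small: "card (tail d) \<le> 2 * 2 ^ e"
    and u: "u \<in> vecs n"
  shows "int (tail_count d u) = int (card (tail d)) \<or> int (tail_count d u) = int (card (tail d)) - 2 ^ e"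
proof -
  define k where "k = int (card (tail d))"
  define D :: int where "D = 2 ^ e"
  have "D dvd k - int (tail_count d u)"
    using tail_count_cong[OF u] unfolding k_def D_def by (simp only: dvd_diff_commute)
  then obtain j where j: "k - int (tail_count d u) = D * j"
    by (elim dvdE)
  have k_le: "k \<le> 2 * D"
    using small of_nat_le_iff[of "card (tail d)" "2 * 2 ^ e", where 'a = int]
    unfolding k_def D_def by simp
  moreover have "int (tail_count d u) \<le> k"
    unfolding k_def using tail_count_le by simp
  ultimately have Dj: "0 \<le> D * j" "D * j \<le> D * 2"
    using j by linarith+
  have "0 < D"
    unfolding D_def by simp
  then have "0 \<le> j" "j \<le> 2"
    using Dj by (simp_all add: zero_le_mult_iff mult_le_cancel_left_pos)
  moreover have "j \<noteq> 2"
  proof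
    assume "j = 2"
    then have "k = 2 * D"
      using j k_le of_nat_0_le_iff[of "tail_count d u"] by simp
    then show False
      using nondvd unfolding k_def D_def by (simp add: int_power_two_dvd_iff[symmetric])
  qed
  ultimately have "j = 0 \<or> j = 1"
    by presburger
  then show ?thesis
    using j unfolding k_def D_def by auto
qed

lemma tail_count_dvd:
  assumes "2 ^ e dvd card (tail d)" "u \<in> vecs n"
  shows "2 ^ e dvd int (tail_count d u)"
proof -
  have "2 ^ e dvd (int (tail_count d u) - int (card (tail d))) + int (card (tail d))"
    using tail_count_cong[OF assms(2)] assms(1) by (intro dvd_add) (simp_all add: int_power_two_dvd_iff)
  then show ?thesis
    by simp
qed

lemma tail_lower_bound_nondvd:
  assumes nondvd: "\<not> 2 ^ e dvd card (tail d)" and "1 \<le> d"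
  shows "2 ^ d < card (tail d)"
proof -
  define k where "k = int (card (tail d))"
  define Q :: int where "Q = 2 ^ d"
  have "(int (tail_count d u) - 1) * (int (tail_count d u) - k) \<le> 0" if "u \<in> vecs n" for u
    using tail_count_nonzero[OF nondvd that] tail_count_le[of d u]
    unfolding k_def by (intro mult_nonneg_nonpos) simp_all
  then have "Q^2 * (\<Sum>u\<in>vecs n. (int (tail_count d u) - 1) * (int (tail_count d u) - k)) \<le> 0"
    by (simp add: sum_nonpos mult_nonneg_nonpos)
  then have "2 ^ n * (k * (Q - 1) * (Q + 1 - k)) \<le> 0"
    unfolding Q_def k_def tail_moment by (simp add: algebra_simps power2_eq_square)
  moreover have "k \<noteq> 0"
    using nondvd unfolding k_def by (intro notI) simp
  then have "0 < k"
    unfolding k_def by simp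
  moreover have "1 < Q"
    using \<open>1 \<le> d\<close> one_less_power[of "2::int" d] unfolding Q_def by simp
  ultimately have "Q < k"
    by (simp add: mult_le_0_iff zero_less_mult_iff)
  then have "int (2 ^ d) < int (card (tail d))"
    unfolding Q_def k_def by simp
  then show ?thesis
    by (simp only: of_nat_less_iff)
qed

lemma tail_equation_nondvd:
  assumes nondvd: "\<not> 2 ^ e dvd card (tail d)" and small: "card (tail d) \<le> 2 * 2 ^ e" and "1 \<le> d"
  shows "card (tail d) * (2 ^ d - 1) = 2 ^ (d + e) - 1"
proof -
  define k where "k = int (card (tail d))"
  define Q :: int where "Q = 2 ^ d"
  define D :: int where "D = 2 ^ e"
  have "(int (tail_count d u) - k) * (int (tail_count d u) - (k - D)) = 0" if "u \<in> vecs n" for u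
    using tail_count_two_values[OF nondvd small that] unfolding k_def D_def by auto
  then have "(\<Sum>u\<in>vecs n. (int (tail_count d u) - k) * (int (tail_count d u) - (k - D))) = 0"
    by (rule sum.neutral[OF ballI])
  then have "2 ^ n * (k * (Q - 1) * (k * (Q - 1) + 1 - D * Q)) = 0"
    using tail_moment[of d k "k - D"] unfolding Q_def k_def by (simp add: algebra_simps power2_eq_square)
  moreover have "k \<noteq> 0"
    using nondvd unfolding k_def by (intro notI) simp
  moreover have "Q \<noteq> 1"
    using \<open>1 \<le> d\<close> one_less_power[of "2::int" d] unfolding Q_def by simp
  ultimately have "k * (Q - 1) = D * Q - 1"
    by simp
  then have "int (card (tail d) * (2 ^ d - 1)) = int (2 ^ (d + e) - 1)"
    unfolding k_def Q_def D_def by (simp add: of_nat_diff power_add mult.commute)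
  then show ?thesis
    by (simp only: of_nat_eq_iff)
qed

lemma tail_lower_bound_dvd:
  assumes dvd: "2 ^ e dvd card (tail d)" and nonempty: "tail d \<noteq> {}"
  shows "2 ^ (d + e) - 2 ^ d < card (tail d)"
proof -
  define k where "k = int (card (tail d))"
  define Q :: int where "Q = 2 ^ d"
  define D :: int where "D = 2 ^ e"
  have "0 \<le> int (tail_count d u) * (int (tail_count d u) - D)" if u: "u \<in> vecs n" for u
  proof -
    obtain j where "int (tail_count d u) = D * j"
      using tail_count_dvd[OF dvd u] unfolding D_def by (elim dvdE)
    then have "int (tail_count d u) * (int (tail_count d u) - D) = (D * D) * (j * (j - 1))"
      by (simp add: algebra_simps)
    moreover have "0 \<le> j * (j - 1)"
      by (cases "j \<le> 0") (simp_all add: mult_nonpos_nonpos)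
    ultimately show ?thesis
      by simp
  qed
  then have "0 \<le> Q^2 * (\<Sum>u\<in>vecs n. (int (tail_count d u) - 0) * (int (tail_count d u) - D))"
    by (simp add: sum_nonneg)
  then have "0 \<le> 2 ^ n * (k * (Q + k - 1 - D * Q))"
    unfolding Q_def k_def tail_moment by (simp add: algebra_simps power2_eq_square)
  moreover have "0 < k"
    using nonempty finite_tail unfolding k_def by (simp add: card_gt_0_iff)
  ultimately have "D * Q - Q < k"
    by (simp add: zero_le_mult_iff)
  then have "int (2 ^ (d + e) - 2 ^ d) < int (card (tail d))"
    unfolding k_def Q_def D_def by (simp add: of_nat_diff power_add mult.commute)
  then show ?thesis
    by (simp only: of_nat_less_iff)
qed

end

context vector_space_partition
begin

theorem tail_bounds_of_classes:
  assumes classes: "\<forall>b\<in>B. card (V b) = 1 \<or> card (V b) = 2 ^ d1 \<or> 2 ^ d2 dvd card (V b)"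
    and "1 \<le> d1" "d1 < d2" "d2 \<le> n" "tail d1 \<noteq> {}"
  shows "tail_bounds d1 d2 (card (tail d1))"
proof -
  interpret tail_congruence n B V d1 "d2 - d1"
    by unfold_locales (rule tail_count_congruence[OF classes \<open>d1 < d2\<close> \<open>d2 \<le> n\<close>])
  have "d1 + (d2 - d1) = d2"
    using \<open>d1 < d2\<close> by simp
  then show ?thesis
    using assms(2,3) tail_lower_bound_nondvd tail_equation_nondvd
      tail_lower_bound_dvd[OF _ \<open>tail d1 \<noteq> {}\<close>]
    by (intro tail_bounds_intro) simp_all
qed

end

section \<open>Quadratic APN functions\<close>

lemma vector_space_partition_linear_spaces:
  assumes "is_APN n F" "is_quadratic n F" "\<forall>x\<in>vecs n. F x \<in> vecs n"
  shows "vector_space_partition n (vecs n - {vzero}) (linear_space n F)"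
proof
  fix x assume "x \<in> vecs n" "x \<noteq> vzero"
  then show "card {b \<in> vecs n - {vzero}. x \<in> linear_space n F b} = 1"
    using linear_spaces_partition[OF assms] by (simp add: conj_assoc set_diff_eq)
qed (use is_subspace_linear_space[OF assms(2)] in auto)

definition nonbent_dims :: "nat \<Rightarrow> ((nat \<Rightarrow> bool) \<Rightarrow> (nat \<Rightarrow> bool)) \<Rightarrow> nat set" where
  "nonbent_dims n F = {linear_dim n F b | b. b \<in> vecs n \<and> b \<noteq> vzero \<and> linear_dim n F b \<noteq> 0}"

lemma strict_mono_amplitude_level: "strict_mono (\<lambda>d::nat. 2 powr ((real n + real d) / 2))"
  by (rule strict_monoI) (simp add: divide_strict_right_mono)

lemma nonbent_amplitudes_eq:
  assumes "is_quadratic n F"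
  shows "nonbent_amplitudes n F = (\<lambda>d. 2 powr ((real n + real d) / 2)) ` nonbent_dims n F"
proof -
  have bent: "2 powr ((real n + real d) / 2) = 2 powr (real n / 2) \<longleftrightarrow> d = 0" for d :: nat
    using strict_mono_eq[OF strict_mono_amplitude_level[of n], of d 0] by simp
  have "nonbent_amplitudes n F = {2 powr ((real n + real (linear_dim n F b)) / 2) | b.
      b \<in> vecs n \<and> b \<noteq> vzero \<and> linear_dim n F b \<noteq> 0}"
    unfolding nonbent_amplitudes_def
  proof (intro Collect_cong ex_cong1)
    fix x b
    show "(x = amplitude n F b \<and> b \<in> vecs n \<and> b \<noteq> vzero \<and> amplitude n F b \<noteq> 2 powr (real n / 2))
      \<longleftrightarrow> (x = 2 powr ((real n + real (linear_dim n F b)) / 2) \<and> b \<in> vecs n \<and> b \<noteq> vzero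
        \<and> linear_dim n F b \<noteq> 0)"
      by (cases "b \<in> vecs n") (simp_all add: amplitude_eq[OF assms] bent)
  qed
  then show ?thesis
    unfolding nonbent_dims_def by blast
qed

lemma card_linear_space_cases:
  assumes "is_quadratic n F" "b \<in> vecs n" "b \<noteq> vzero"
    and "\<forall>e\<in>nonbent_dims n F. d1 \<le> e" "\<forall>e\<in>nonbent_dims n F. d1 < e \<longrightarrow> d2 \<le> e"
  shows "card (linear_space n F b) = 1 \<or> card (linear_space n F b) = 2 ^ d1
    \<or> 2 ^ d2 dvd card (linear_space n F b)"
proof -
  have "linear_dim n F b = 0 \<or> linear_dim n F b = d1 \<or> d2 \<le> linear_dim n F b"
  proof (cases "linear_dim n F b = 0")
    case False
    then have "linear_dim n F b \<in> nonbent_dims n F"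
      using assms(2,3) unfolding nonbent_dims_def by blast
    then show ?thesis
      using assms(4,5) by (cases "d1 < linear_dim n F b") auto
  qed simp
  then show ?thesis
    by (auto simp: card_linear_space[OF assms(1,2)] le_imp_power_dvd)
qed

theorem tail_bounds_quadratic_APN:
  assumes "is_APN n F" "is_quadratic n F" "\<forall>x\<in>vecs n. F x \<in> vecs n"
    and d1: "d1 \<in> nonbent_dims n F" "\<forall>e\<in>nonbent_dims n F. d1 \<le> e"
    and d2: "d2 \<in> nonbent_dims n F" "d1 < d2" "\<forall>e\<in>nonbent_dims n F. d1 < e \<longrightarrow> d2 \<le> e"
  shows "tail_bounds d1 d2 (card {b \<in> vecs n. b \<noteq> vzero \<and> linear_dim n F b = d1})"
proof -
  interpret vector_space_partition n "vecs n - {vzero}" "linear_space n F"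
    using vector_space_partition_linear_spaces[OF assms(1-3)] .
  have tail_eq: "tail d1 = {b \<in> vecs n. b \<noteq> vzero \<and> linear_dim n F b = d1}"
    unfolding tail_def using card_linear_space[OF assms(2)] by auto
  obtain b1 where "b1 \<in> vecs n" "b1 \<noteq> vzero" "linear_dim n F b1 = d1" "d1 \<noteq> 0"
    using d1(1) unfolding nonbent_dims_def by blast
  then have "1 \<le> d1" "tail d1 \<noteq> {}"
    unfolding tail_eq by auto
  moreover have "d2 \<le> n"
    using d2(1) linear_dim_le[OF assms(2)] unfolding nonbent_dims_def by auto
  moreover have "\<forall>b\<in>vecs n - {vzero}. card (linear_space n F b) = 1
      \<or> card (linear_space n F b) = 2 ^ d1 \<or> 2 ^ d2 dvd card (linear_space n F b)"
    using card_linear_space_cases[OF assms(2) _ _ d1(2) d2(3)] by simp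
  ultimately show ?thesis
    using tail_bounds_of_classes[of d1 d2] \<open>d1 < d2\<close> unfolding tail_eq by simp
qed

theorem mainTheorem7:
  fixes n d1 d2 k :: nat and F :: "(nat \<Rightarrow> bool) \<Rightarrow> (nat \<Rightarrow> bool)"
  assumes "even n"
    and "\<forall>x \<in> vecs n. F x \<in> vecs n"
    and "is_quadratic n F"
    and "is_APN n F"
    and "2 powr ((real n + real d1) / 2) \<in> nonbent_amplitudes n F"
    and "\<forall>t \<in> nonbent_amplitudes n F. 2 powr ((real n + real d1) / 2) \<le> t"
    and "2 powr ((real n + real d2) / 2) \<in> nonbent_amplitudes n F"
    and "2 powr ((real n + real d1) / 2) < 2 powr ((real n + real d2) / 2)"
    and "\<forall>t \<in> nonbent_amplitudes n F. 2 powr ((real n + real d1) / 2) < t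
           \<longrightarrow> 2 powr ((real n + real d2) / 2) \<le> t"
    and "k = card {b \<in> vecs n. b \<noteq> vzero \<and>
                   amplitude n F b = 2 powr ((real n + real d1) / 2)}"
  shows "(\<not> 2 ^ (d2 - d1) dvd k \<and> d2 < 2 * d1 \<longrightarrow> k \<ge> 2 ^ d1 + 1)
       \<and> (\<not> 2 ^ (d2 - d1) dvd k \<and> d2 \<ge> 2 * d1 \<longrightarrow>
            (d1 dvd d2 \<and> k = (2 ^ d2 - 1) div (2 ^ d1 - 1)) \<or> k > 2 * 2 ^ (d2 - d1))
       \<and> (2 ^ (d2 - d1) dvd k \<and> d2 \<le> 2 * d1 \<longrightarrow> k \<ge> 2 ^ d2 - 2 ^ d1 + 2 ^ (d2 - d1))
       \<and> (2 ^ (d2 - d1) dvd k \<and> d2 \<ge> 2 * d1 \<longrightarrow> k \<ge> 2 ^ d2)"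
proof -
  note mono = strict_mono_amplitude_level[of n]
  have dims: "d1 \<in> nonbent_dims n F" "\<forall>e\<in>nonbent_dims n F. d1 \<le> e"
      "d2 \<in> nonbent_dims n F" "d1 < d2" "\<forall>e\<in>nonbent_dims n F. d1 < e \<longrightarrow> d2 \<le> e"
    using assms(5-9) unfolding nonbent_amplitudes_eq[OF assms(3)]
    by (simp_all add: inj_image_mem_iff[OF strict_mono_imp_inj_on[OF mono]]
        strict_mono_less_eq[OF mono] strict_mono_less[OF mono])
  have "k = card {b \<in> vecs n. b \<noteq> vzero \<and> linear_dim n F b = d1}"
    unfolding assms(10)
    by (intro arg_cong[where f = card] Collect_cong) (auto simp: amplitude_eq[OF assms(3)] strict_mono_eq[OF mono])
  then show ?thesis
    using tail_bounds_quadratic_APN[OF assms(4,3,2) dims] unfolding tail_bounds_def by simp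
qed

end
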